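(* Let $\Lambda$ be a left cancellative small category, $v\in\Lambda^0$, and $C\in v\Lambda^*$. Then $C\in v\partial\Lambda$ if and only if: for every finite $\mathcal F\subseteq\mathcal D^{(0)}_v$ that does not cover $C$ and every $E\in C$, there exists $G\in\mathcal D^{(0)}_v$ with $G\subseteq E\setminus\bigcup\mathcal F$.
   Context: A left cancellative small category (LCSC) is a small category $\Lambda$ such that $\alpha\beta=\alpha\gamma$ implies $\beta=\gamma$. Composition $\alpha\beta$ is defined when $s(\alpha)=r(\beta)$; $\Lambda^0$ is the set of objects; $v\Lambda=\{\alpha:r(\alpha)=v\}$. For $\alpha\in\Lambda$, $\tau^\alpha(\beta)=\alpha\beta$ on $s(\alpha)\Lambda$ and $\sigma^\alpha:\alpha\Lambda\to s(\alpha)\Lambda$ is its inverse. A zigzag is a tuple $\zeta=(\alpha_1,\beta_1,\dots,\alpha_n,\beta_n)$ with $r(\alpha_i)=r(\beta_i)$ and $s(\alpha_{i+1})=s(\beta_i)$, $s(\zeta)=s(\beta_n)$; the zigzag map $\varphi_\zeta=\sigma^{\alpha_1}\circ\tau^{\beta_1}\circ\cdots\circ\sigma^{\alpha_n}\circ\tau^{\beta_n}$ (partial map) has domain $A(\zeta)\subseteq s(\zeta)\Lambda$. $\mathcal D^{(0)}_v$ is the set of nonempty $A(\zeta)$ with $s(\zeta)=v$, and $\mathcal A_v$ the ring of subsets of $v\Lambda$ generated by it. A filter in $\mathcal D^{(0)}_v$ is a nonempty $C\subseteq\mathcal D^{(0)}_v$ closed under intersection and under supersets within $\mathcal D^{(0)}_v$.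 A finite $\mathcal F\subseteq\mathcal D^{(0)}_v$ covers the filter $C$ if some $E\in C$ satisfies $E\subseteq\bigcup\mathcal F$. $v\Lambda^*$ is the set of filters $C$ in $\mathcal D^{(0)}_v$ such that every finite $\mathcal F\subseteq\mathcal D^{(0)}_v$ with $\mathcal F\cap C=\varnothing$ does not cover $C$; $v\Lambda^{**}$ is its set of maximal elements. $v\Lambda^*$ is identified with the space $X_v$ of ultrafilters of the ring $\mathcal A_v$ via $C\mapsto\mathcal U_C$, the unique ultrafilter of $\mathcal A_v$ with $\mathcal U_C\cap\mathcal D^{(0)}_v=C$ (generated by the sets $E\setminus\bigcup\mathcal F$, $E\in C$, $\mathcal F$ finite not covering $C$); $X_v$ carries the topology with compact open basis $\widehat A=\{C: A\in\mathcal U_C\}$, $A\in\mathcal A_v$. The boundary $v\partial\Lambda$ is the closure of $v\Lambda^{**}$ in $X_v$. *)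

theory Defs
  imports "HOL-Analysis.Analysis"
begin

text \<open>A small category: a set of morphisms, the objects are identified with the
identity morphisms (a subset of the morphisms), range/source maps and a composition
(only meaningful when src a = rng b).\<close>

record 'a cat =
  mor  :: "'a set"
  obj  :: "'a set"
  rng  :: "'a \<Rightarrow> 'a"
  src  :: "'a \<Rightarrow> 'a"
  comp :: "'a \<Rightarrow> 'a \<Rightarrow> 'a"

definition small_category :: "'a cat \<Rightarrow> bool" where
  "small_category L \<longleftrightarrow>
     obj L \<subseteq> mor L \<and>
     (\<forall>a\<in>mor L. rng L a \<in> obj L \<and> src L a \<in> obj L) \<and>
     (\<forall>v\<in>obj L. rng L v = v \<and> src L v = v) \<and>
     (\<forall>a\<in>mor L. \<forall>b\<in>mor L. src L a = rng L b \<longrightarrow>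
        comp L a b \<in> mor L \<and> rng L (comp L a b) = rng L a \<and> src L (comp L a b) = src L b) \<and>
     (\<forall>a\<in>mor L. comp L (rng L a) a = a \<and> comp L a (src L a) = a) \<and>
     (\<forall>a\<in>mor L. \<forall>b\<in>mor L. \<forall>c\<in>mor L. src L a = rng L b \<longrightarrow> src L b = rng L c \<longrightarrow>
        comp L (comp L a b) c = comp L a (comp L b c))"

definition LCSC :: "'a cat \<Rightarrow> bool" where
  "LCSC L \<longleftrightarrow> small_category L \<and>
     (\<forall>a\<in>mor L. \<forall>b\<in>mor L. \<forall>c\<in>mor L. src L a = rng L b \<longrightarrow> src L a = rng L c \<longrightarrow>
        comp L a b = comp L a c \<longrightarrow> b = c)"

definition vL :: "'a cat \<Rightarrow> 'a \<Rightarrow> 'a set" where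
  "vL L v = {a \<in> mor L. rng L a = v}"

text \<open>A zigzag (a1,b1,...,an,bn) is the nonempty list [(a1,b1),...,(an,bn)].\<close>

definition zigzag :: "'a cat \<Rightarrow> ('a \<times> 'a) list \<Rightarrow> bool" where
  "zigzag L z \<longleftrightarrow> z \<noteq> [] \<and>
     (\<forall>(a,b)\<in>set z. a \<in> mor L \<and> b \<in> mor L \<and> rng L a = rng L b) \<and>
     (\<forall>i. Suc i < length z \<longrightarrow> src L (fst (z ! Suc i)) = src L (snd (z ! i)))"

definition zsrc :: "'a cat \<Rightarrow> ('a \<times> 'a) list \<Rightarrow> 'a" where
  "zsrc L z = src L (snd (last z))"

text \<open>The partial map sigma^a o tau^b o (rest), applied right to left; None = undefined.\<close>
fun zmap :: "'a cat \<Rightarrow> ('a \<times> 'a) list \<Rightarrow> 'a \<Rightarrow> 'a option" where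
  "zmap L [] x = Some x"
| "zmap L ((a, b) # z) x =
     (case zmap L z x of
        None \<Rightarrow> None
      | Some y \<Rightarrow>
          (if y \<in> mor L \<and> rng L y = src L b \<and>
              (\<exists>g\<in>mor L. rng L g = src L a \<and> comp L a g = comp L b y)
           then Some (THE g. g \<in> mor L \<and> rng L g = src L a \<and> comp L a g = comp L b y)
           else None))"

definition Adom :: "'a cat \<Rightarrow> ('a \<times> 'a) list \<Rightarrow> 'a set" where
  "Adom L z = {x \<in> vL L (zsrc L z). zmap L z x \<noteq> None}"

definition D0 :: "'a cat \<Rightarrow> 'a \<Rightarrow> 'a set set" where
  "D0 L v = {Adom L z | z. zigzag L z \<and> zsrc L z = v \<and> Adom L z \<noteq> {}}"

definition Aring :: "'a cat \<Rightarrow> 'a \<Rightarrow> 'a set set" where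
  "Aring L v = \<Inter>{M. ring_of_sets (vL L v) M \<and> D0 L v \<subseteq> M}"

definition D0_filter :: "'a cat \<Rightarrow> 'a \<Rightarrow> 'a set set \<Rightarrow> bool" where
  "D0_filter L v C \<longleftrightarrow> C \<noteq> {} \<and> C \<subseteq> D0 L v \<and>
     (\<forall>E\<in>C. \<forall>F\<in>C. E \<inter> F \<in> C) \<and>
     (\<forall>E\<in>C. \<forall>F\<in>D0 L v. E \<subseteq> F \<longrightarrow> F \<in> C)"

definition covers :: "'a set set \<Rightarrow> 'a set set \<Rightarrow> bool" where
  "covers \<F> C \<longleftrightarrow> (\<exists>E\<in>C. E \<subseteq> \<Union>\<F>)"

definition Lstar :: "'a cat \<Rightarrow> 'a \<Rightarrow> 'a set set set" where
  "Lstar L v = {C. D0_filter L v C \<and>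
     (\<forall>\<F>. finite \<F> \<and> \<F> \<subseteq> D0 L v \<and> \<F> \<inter> C = {} \<longrightarrow> \<not> covers \<F> C)}"

definition Lstarstar :: "'a cat \<Rightarrow> 'a \<Rightarrow> 'a set set set" where
  "Lstarstar L v = {C \<in> Lstar L v. \<forall>C'\<in>Lstar L v. C \<subseteq> C' \<longrightarrow> C' = C}"

definition ring_filter :: "'b set set \<Rightarrow> 'b set set \<Rightarrow> bool" where
  "ring_filter M U \<longleftrightarrow> U \<subseteq> M \<and> U \<noteq> {} \<and> {} \<notin> U \<and>
     (\<forall>A\<in>U. \<forall>B\<in>U. A \<inter> B \<in> U) \<and> (\<forall>A\<in>U. \<forall>B\<in>M. A \<subseteq> B \<longrightarrow> B \<in> U)"

definition ring_ultrafilter :: "'b set set \<Rightarrow> 'b set set \<Rightarrow> bool" where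
  "ring_ultrafilter M U \<longleftrightarrow> ring_filter M U \<and> (\<forall>U'. ring_filter M U' \<and> U \<subseteq> U' \<longrightarrow> U' = U)"

definition Xv :: "'a cat \<Rightarrow> 'a \<Rightarrow> 'a set set set" where
  "Xv L v = {U. ring_ultrafilter (Aring L v) U}"

definition UC :: "'a cat \<Rightarrow> 'a \<Rightarrow> 'a set set \<Rightarrow> 'a set set" where
  "UC L v C = (THE U. U \<in> Xv L v \<and> U \<inter> D0 L v = C)"

definition Xtop :: "'a cat \<Rightarrow> 'a \<Rightarrow> 'a set set topology" where
  "Xtop L v = topology_generated_by {{U \<in> Xv L v. A \<in> U} | A. A \<in> Aring L v}"

definition boundary :: "'a cat \<Rightarrow> 'a \<Rightarrow> 'a set set set" where
  "boundary L v = Xtop L v closure_of (UC L v ` Lstarstar L v)"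

end

theory Submission
  imports Defs
begin

text \<open>
  For \<open>C \<in> v\<Lambda>*\<close> the ultrafilter \<open>U_C\<close> is the upward closure in \<open>A_v\<close> of the sets \<open>E - \<Union>\<F>\<close>
  with \<open>E \<in> C\<close> and \<open>\<F>\<close> finite and not covering \<open>C\<close>: they form a filter base deciding every member
  of \<open>A_v\<close>, because the sets it decides form a ring containing \<open>D0_v\<close>. The basic open sets
  \<open>hat A\<close> are closed under intersection, so \<open>U_C\<close> lies in the closure of \<open>v\<Lambda>**\<close> iff every
  \<open>A \<in> U_C\<close> belongs to some \<open>U_C'\<close> with \<open>C'\<close> maximal. For a maximal \<open>C'\<close> the ultrafilter
  \<open>U_C'\<close> is generated by \<open>C'\<close> alone: \<open>D0_v\<close> is closed under nonempty intersections (concatenate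
  zigzags of the form \<open>\<zeta>\<inverse>\<zeta>\<close>), so a maximal filter contains, for every set of \<open>D0_v\<close> it
  misses, a member disjoint from it. Hence \<open>U_C\<close> is in the boundary iff every generator
  \<open>E - \<Union>\<F>\<close> contains a set of \<open>D0_v\<close>, which in turn lies in a maximal filter by Zorn's lemma.
\<close>

section \<open>Rings of sets and their ultrafilters\<close>

lemma ring_of_sets_Inter_rings:
  assumes "G \<subseteq> Pow \<Omega>"
  shows "ring_of_sets \<Omega> (\<Inter>{M. ring_of_sets \<Omega> M \<and> G \<subseteq> M})"
proof (rule ring_of_setsI)
  have "Pow \<Omega> \<in> {M. ring_of_sets \<Omega> M \<and> G \<subseteq> M}"
    using assms ring_of_sets_Pow[of \<Omega>] by simp
  then show "\<Inter>{M. ring_of_sets \<Omega> M \<and> G \<subseteq> M} \<subseteq> Pow \<Omega>" by blast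
qed (auto simp: ring_of_sets_iff)

lemma ring_filter_subset: "ring_filter M U \<Longrightarrow> U \<subseteq> M"
  and ring_filter_nonempty: "ring_filter M U \<Longrightarrow> U \<noteq> {}"
  and ring_filter_empty: "ring_filter M U \<Longrightarrow> {} \<notin> U"
  and ring_filter_Int: "ring_filter M U \<Longrightarrow> A \<in> U \<Longrightarrow> B \<in> U \<Longrightarrow> A \<inter> B \<in> U"
  and ring_filter_mono: "ring_filter M U \<Longrightarrow> A \<in> U \<Longrightarrow> B \<in> M \<Longrightarrow> A \<subseteq> B \<Longrightarrow> B \<in> U"
  by (simp_all add: ring_filter_def)

lemma ring_ultrafilter_disjoint:
  assumes "ring_of_sets \<Omega> M" "ring_ultrafilter M U" "X \<in> M" "X \<notin> U"
  shows "\<exists>W\<in>U. W \<inter> X = {}"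
proof (rule ccontr)
  assume meets: "\<not> (\<exists>W\<in>U. W \<inter> X = {})"
  have U: "ring_filter M U" using assms(2) by (simp add: ring_ultrafilter_def)
  let ?U' = "{Z \<in> M. \<exists>W\<in>U. W \<inter> X \<subseteq> Z}"
  have "ring_filter M ?U'"
    unfolding ring_filter_def
  proof (intro conjI ballI impI)
    obtain W where "W \<in> U" using ring_filter_nonempty[OF U] by blast
    then show "?U' \<noteq> {}" using assms(3) by blast
    show "{} \<notin> ?U'" using meets by blast
  next
    fix A B assume "A \<in> ?U'" "B \<in> ?U'"
    then obtain W1 W2 where W: "W1 \<in> U" "W2 \<in> U" "W1 \<inter> X \<subseteq> A" "W2 \<inter> X \<subseteq> B"
      and AB: "A \<in> M" "B \<in> M"
      by blast
    have "W1 \<inter> W2 \<in> U" using ring_filter_Int[OF U W(1,2)] .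
    moreover have "(W1 \<inter> W2) \<inter> X \<subseteq> A \<inter> B" using W(3,4) by blast
    moreover have "A \<inter> B \<in> M" using AB semiring_of_sets.Int[OF ring_of_sets.axioms(1)[OF assms(1)]] by blast
    ultimately show "A \<inter> B \<in> ?U'" by blast
  qed blast+
  moreover have "U \<subseteq> ?U'" using ring_filter_subset[OF U] by blast
  ultimately have "?U' = U" using assms(2) by (simp add: ring_ultrafilter_def)
  moreover have "X \<in> ?U'" using assms(3) ring_filter_nonempty[OF U] by blast
  ultimately show False using assms(4) by simp
qed

lemma ring_ultrafilter_Diff:
  assumes "ring_of_sets \<Omega> M" "ring_ultrafilter M U" "X \<in> U" "Y \<in> M" "Y \<notin> U"
  shows "X - Y \<in> U"
proof -
  interpret ring_of_sets \<Omega> M by fact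
  have U: "ring_filter M U" using assms(2) by (simp add: ring_ultrafilter_def)
  obtain W where W: "W \<in> U" "W \<inter> Y = {}"
    using ring_ultrafilter_disjoint[OF assms(1,2,4,5)] by blast
  have "X \<inter> W \<in> U" using ring_filter_Int[OF U assms(3) W(1)] .
  moreover have "X - Y \<in> M" using assms(3,4) ring_filter_subset[OF U] by blast
  moreover have "X \<inter> W \<subseteq> X - Y" using W(2) by blast
  ultimately show ?thesis by (rule ring_filter_mono[OF U])
qed

lemma ring_ultrafilter_Diff_Union:
  assumes "ring_of_sets \<Omega> M" "ring_ultrafilter M U" "X \<in> U" "finite \<F>" "\<F> \<subseteq> M" "\<F> \<inter> U = {}"
  shows "X - \<Union>\<F> \<in> U"
  using assms(4-6)
proof (induction \<F> rule: finite_induct)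
  case (insert F \<F>)
  then have "(X - \<Union>\<F>) - F \<in> U"
    using ring_ultrafilter_Diff[OF assms(1,2)] by blast
  then show ?case by (simp add: Diff_eq Int_ac)
qed (simp add: assms(3))

definition upward_closure :: "'b set set \<Rightarrow> 'b set set \<Rightarrow> 'b set set" where
  "upward_closure M N = {A \<in> M. \<exists>n\<in>N. n \<subseteq> A}"

definition decides :: "'b set set \<Rightarrow> 'b set \<Rightarrow> bool" where
  "decides N A \<longleftrightarrow> (\<exists>n\<in>N. n \<subseteq> A) \<or> (\<exists>n\<in>N. n \<inter> A = {})"

lemma ring_of_sets_decided:
  assumes "N \<noteq> {}" "\<And>a b. a \<in> N \<Longrightarrow> b \<in> N \<Longrightarrow> a \<inter> b \<in> N"
  shows "ring_of_sets \<Omega> {A \<in> Pow \<Omega>. decides N A}"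
proof (rule ring_of_setsI)
  show "{} \<in> {A \<in> Pow \<Omega>. decides N A}" using assms(1) by (auto simp: decides_def)
next
  fix a b assume "a \<in> {A \<in> Pow \<Omega>. decides N A}" "b \<in> {A \<in> Pow \<Omega>. decides N A}"
  then have ab: "a \<subseteq> \<Omega>" "b \<subseteq> \<Omega>" and da: "decides N a" and db: "decides N b" by auto
  have "decides N (a \<union> b)"
  proof (cases "\<exists>n\<in>N. n \<subseteq> a \<or> n \<subseteq> b")
    case True
    then show ?thesis unfolding decides_def by blast
  next
    case False
    with da db obtain na nb where "na \<in> N" "na \<inter> a = {}" "nb \<in> N" "nb \<inter> b = {}"
      unfolding decides_def by blast
    then have "na \<inter> nb \<in> N" "(na \<inter> nb) \<inter> (a \<union> b) = {}"
      by (auto intro: assms(2))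
    then show ?thesis unfolding decides_def by (intro disjI2 bexI)
  qed
  with ab show "a \<union> b \<in> {A \<in> Pow \<Omega>. decides N A}" by blast
  have "decides N (a - b)"
  proof (cases "\<exists>n\<in>N. n \<inter> a = {} \<or> n \<subseteq> b")
    case True
    then show ?thesis unfolding decides_def by blast
  next
    case False
    with da db obtain na nb where "na \<in> N" "na \<subseteq> a" "nb \<in> N" "nb \<inter> b = {}"
      unfolding decides_def by blast
    then have "na \<inter> nb \<in> N" "na \<inter> nb \<subseteq> a - b"
      by (auto intro: assms(2))
    then show ?thesis unfolding decides_def by (intro disjI1 bexI)
  qed
  with ab show "a - b \<in> {A \<in> Pow \<Omega>. decides N A}" by blast
qed auto

lemma subset_upward_closure: "N \<subseteq> M \<Longrightarrow> N \<subseteq> upward_closure M N"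
  by (auto simp: upward_closure_def)

lemma ring_filter_upward_closure:
  assumes "ring_of_sets \<Omega> M" "N \<subseteq> M" "N \<noteq> {}" "{} \<notin> N"
    and "\<And>a b. a \<in> N \<Longrightarrow> b \<in> N \<Longrightarrow> a \<inter> b \<in> N"
  shows "ring_filter M (upward_closure M N)"
proof -
  interpret ring_of_sets \<Omega> M by fact
  show ?thesis
    unfolding ring_filter_def
  proof (intro conjI ballI impI)
    show "upward_closure M N \<subseteq> M" by (auto simp: upward_closure_def)
    show "upward_closure M N \<noteq> {}" using subset_upward_closure[OF assms(2)] assms(3) by blast
    show "{} \<notin> upward_closure M N" using assms(4) by (auto simp: upward_closure_def)
  next
    fix A B assume "A \<in> upward_closure M N" "B \<in> upward_closure M N"
    then obtain n1 n2 where "A \<in> M" "B \<in> M" "n1 \<in> N" "n2 \<in> N" "n1 \<subseteq> A" "n2 \<subseteq> B"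
      by (auto simp: upward_closure_def)
    moreover from this have "n1 \<inter> n2 \<in> N" by (intro assms(5))
    ultimately show "A \<inter> B \<in> upward_closure M N"
      unfolding upward_closure_def by blast
  next
    fix A B assume "A \<in> upward_closure M N" "B \<in> M" "A \<subseteq> B"
    then show "B \<in> upward_closure M N" by (auto simp: upward_closure_def)
  qed
qed

lemma ring_ultrafilter_upward_closure:
  assumes "ring_of_sets \<Omega> M" "N \<subseteq> M" "N \<noteq> {}" "{} \<notin> N"
    and "\<And>a b. a \<in> N \<Longrightarrow> b \<in> N \<Longrightarrow> a \<inter> b \<in> N" and "\<And>A. A \<in> M \<Longrightarrow> decides N A"
  shows "ring_ultrafilter M (upward_closure M N)"
proof -
  have "U' \<subseteq> upward_closure M N" if U': "ring_filter M U'" "upward_closure M N \<subseteq> U'" for U'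
  proof
    fix A assume A: "A \<in> U'"
    then have "A \<in> M" using ring_filter_subset[OF U'(1)] by blast
    show "A \<in> upward_closure M N"
    proof (cases "\<exists>n\<in>N. n \<subseteq> A")
      case True
      with \<open>A \<in> M\<close> show ?thesis by (simp add: upward_closure_def)
    next
      case False
      with assms(6)[OF \<open>A \<in> M\<close>] obtain n where "n \<in> N" "n \<inter> A = {}"
        unfolding decides_def by blast
      moreover from this have "n \<inter> A \<in> U'"
        using ring_filter_Int[OF U'(1) _ A] subset_upward_closure[OF assms(2)] U'(2) by blast
      ultimately show ?thesis using ring_filter_empty[OF U'(1)] by simp
    qed
  qed
  with ring_filter_upward_closure[OF assms(1-5)] show ?thesis
    unfolding ring_ultrafilter_def by blast
qed

section \<open>Topologies generated by intersection-closed families\<close>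

lemma generate_topology_on_Int_closed_basis:
  assumes Int_closed: "\<And>a b. a \<in> B \<Longrightarrow> b \<in> B \<Longrightarrow> a \<inter> b \<in> B"
    and "generate_topology_on B T" "x \<in> T"
  shows "\<exists>b\<in>B. x \<in> b \<and> b \<subseteq> T"
  using assms(2,3)
proof (induction arbitrary: x rule: generate_topology_on.induct)
  case (Int a b)
  obtain a' where a': "a' \<in> B" "x \<in> a'" "a' \<subseteq> a" using Int.IH(1) Int.prems by blast
  obtain b' where b': "b' \<in> B" "x \<in> b'" "b' \<subseteq> b" using Int.IH(2) Int.prems by blast
  have "a' \<inter> b' \<in> B" using Int_closed[OF a'(1) b'(1)] .
  moreover have "x \<in> a' \<inter> b'" "a' \<inter> b' \<subseteq> a \<inter> b" using a' b' by auto
  ultimately show ?case by blast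
next
  case (UN K)
  then obtain k where "k \<in> K" "x \<in> k" by blast
  with UN.IH obtain b where "b \<in> B" "x \<in> b" "b \<subseteq> k" by blast
  with \<open>k \<in> K\<close> show ?case by blast
qed auto

lemma in_closure_of_Int_closed_basis:
  assumes "\<And>a b. a \<in> B \<Longrightarrow> b \<in> B \<Longrightarrow> a \<inter> b \<in> B"
  shows "x \<in> topology_generated_by B closure_of S \<longleftrightarrow> x \<in> \<Union>B \<and> (\<forall>b\<in>B. x \<in> b \<longrightarrow> S \<inter> b \<noteq> {})"
proof -
  have "(\<forall>T. x \<in> T \<and> openin (topology_generated_by B) T \<longrightarrow> (\<exists>y. y \<in> S \<and> y \<in> T)) \<longleftrightarrow>
        (\<forall>b\<in>B. x \<in> b \<longrightarrow> S \<inter> b \<noteq> {})"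
  proof (intro iffI ballI impI allI)
    fix b assume "\<forall>T. x \<in> T \<and> openin (topology_generated_by B) T \<longrightarrow> (\<exists>y. y \<in> S \<and> y \<in> T)"
      and "b \<in> B" "x \<in> b"
    then show "S \<inter> b \<noteq> {}" using topology_generated_by_Basis[of b B] by blast
  next
    fix T assume basic: "\<forall>b\<in>B. x \<in> b \<longrightarrow> S \<inter> b \<noteq> {}"
      and T: "x \<in> T \<and> openin (topology_generated_by B) T"
    then have "generate_topology_on B T" by (simp add: openin_topology_generated_by_iff)
    then obtain b where "b \<in> B" "x \<in> b" "b \<subseteq> T"
      using generate_topology_on_Int_closed_basis[of B, OF assms] T by blast
    with basic show "\<exists>y. y \<in> S \<and> y \<in> T" by blast
  qed
  then show ?thesis by (simp add: in_closure_of)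
qed

section \<open>Zigzags\<close>

lemma successively_iff_nth:
  "successively P xs \<longleftrightarrow> (\<forall>i. Suc i < length xs \<longrightarrow> P (xs ! i) (xs ! Suc i))"
proof (induction xs rule: induct_list012)
  case (3 x y zs)
  have "(\<forall>i. Suc i < length (x # y # zs) \<longrightarrow> P ((x # y # zs) ! i) ((x # y # zs) ! Suc i)) \<longleftrightarrow>
        P x y \<and> (\<forall>i. Suc i < length (y # zs) \<longrightarrow> P ((y # zs) ! i) ((y # zs) ! Suc i))"
    by (metis (no_types, lifting) Suc_less_eq length_Cons nth_Cons_0 nth_Cons_Suc
        not0_implies_Suc zero_less_Suc)
  with 3 show ?case by simp
qed simp_all

definition cospan :: "'a cat \<Rightarrow> 'a \<times> 'a \<Rightarrow> bool" where
  "cospan L p \<longleftrightarrow> fst p \<in> mor L \<and> snd p \<in> mor L \<and> rng L (fst p) = rng L (snd p)"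

lemma cospan_swap [simp]: "cospan L (prod.swap p) = cospan L p"
  by (auto simp: cospan_def)

lemma zigzag_iff_successively:
  "zigzag L z \<longleftrightarrow> z \<noteq> [] \<and> (\<forall>p\<in>set z. cospan L p) \<and>
     successively (\<lambda>p q. src L (fst q) = src L (snd p)) z"
  unfolding zigzag_def successively_iff_nth cospan_def by (auto simp: case_prod_beta)

lemma zmap_append:
  "zmap L (z1 @ z2) x = (case zmap L z2 x of None \<Rightarrow> None | Some y \<Rightarrow> zmap L z1 y)"
  by (induction z1) (auto split: option.split)

lemma zmap_Cons: "zmap L (p # z) x = (case zmap L z x of None \<Rightarrow> None | Some y \<Rightarrow> zmap L [p] y)"
  using zmap_append[of L "[p]" z x] by simp

lemma zmap_single_eq_Some:
  assumes "LCSC L" "a \<in> mor L"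
  shows "zmap L [(a, b)] y = Some g \<longleftrightarrow>
    y \<in> mor L \<and> rng L y = src L b \<and> g \<in> mor L \<and> rng L g = src L a \<and> comp L a g = comp L b y"
proof -
  let ?P = "\<lambda>g. g \<in> mor L \<and> rng L g = src L a \<and> comp L a g = comp L b y"
  have the_eq: "(THE g. ?P g) = g0" if "?P g0" for g0
  proof (rule the_equality)
    fix g1 assume "?P g1"
    with that assms show "g1 = g0" unfolding LCSC_def by metis
  qed (fact that)
  show ?thesis
  proof
    assume "zmap L [(a, b)] y = Some g"
    then have y: "y \<in> mor L" "rng L y = src L b" and "\<exists>g. ?P g" and g: "g = (THE g. ?P g)"
      by (auto split: if_splits)
    then obtain g0 where "?P g0" by blast
    with y g the_eq show "y \<in> mor L \<and> rng L y = src L b \<and> ?P g" by simp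
  next
    assume "y \<in> mor L \<and> rng L y = src L b \<and> ?P g"
    with the_eq[of g] show "zmap L [(a, b)] y = Some g" by auto
  qed
qed

lemma zmap_single_swap:
  assumes "LCSC L" "cospan L (a, b)" "zmap L [(a, b)] y = Some g"
  shows "zmap L [(b, a)] g = Some y"
proof -
  have a: "a \<in> mor L" and b: "b \<in> mor L" using assms(2) by (auto simp: cospan_def)
  have "y \<in> mor L \<and> rng L y = src L b \<and> g \<in> mor L \<and> rng L g = src L a \<and> comp L a g = comp L b y"
    using assms(3) zmap_single_eq_Some[OF assms(1) a] by blast
  then show ?thesis
    unfolding zmap_single_eq_Some[OF assms(1) b] by simp
qed

definition zrev :: "('a \<times> 'a) list \<Rightarrow> ('a \<times> 'a) list" where
  "zrev z = rev (map prod.swap z)"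

lemma zmap_zrev:
  assumes "LCSC L" "\<forall>p\<in>set z. cospan L p" "zmap L z x = Some y"
  shows "zmap L (zrev z) y = Some x"
  using assms(2,3)
proof (induction z arbitrary: y)
  case (Cons p z)
  obtain a b where p: "p = (a, b)" by fastforce
  from Cons.prems obtain y' where y': "zmap L z x = Some y'" "zmap L [(a, b)] y' = Some y"
    by (subst (asm) zmap_Cons) (auto simp: p split: option.splits)
  have "zmap L [(b, a)] y = Some y'"
    using zmap_single_swap[OF assms(1) _ y'(2)] Cons.prems p by auto
  with Cons.IH[OF _ y'(1)] Cons.prems show ?case by (simp add: zrev_def p zmap_append)
qed (simp add: zrev_def)

text \<open>Since \<open>zrev z\<close> inverts the zigzag map of \<open>z\<close>, the zigzag \<open>zrev z @ z\<close> acts as the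
  identity on \<open>A(z)\<close>; concatenating two such zigzags intersects their domains.\<close>

lemma zmap_zrev_append:
  assumes "LCSC L" "\<forall>p\<in>set z. cospan L p"
  shows "zmap L (zrev z @ z) x = (if zmap L z x = None then None else Some x)"
  using zmap_zrev[OF assms] by (auto simp: zmap_append split: option.split)

lemma zigzag_zrev:
  assumes "zigzag L z"
  shows "zigzag L (zrev z)"
  using assms unfolding zigzag_iff_successively zrev_def
  by (auto simp: successively_map successively_rev elim!: successively_mono)

lemma hd_zrev: "z \<noteq> [] \<Longrightarrow> hd (zrev z) = prod.swap (last z)"
  by (simp add: zrev_def hd_rev last_map)

lemma zsrc_zrev: "z \<noteq> [] \<Longrightarrow> zsrc L (zrev z) = src L (fst (hd z))"
  by (simp add: zsrc_def zrev_def last_rev hd_map)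

lemma zigzag_append:
  assumes "zigzag L z1" "zigzag L z2" "src L (fst (hd z2)) = zsrc L z1"
  shows "zigzag L (z1 @ z2)"
  using assms unfolding zigzag_iff_successively zsrc_def
  by (auto simp: successively_append_iff)

lemma zsrc_append: "z2 \<noteq> [] \<Longrightarrow> zsrc L (z1 @ z2) = zsrc L z2"
  by (simp add: zsrc_def)

lemma zrev_eq_Nil_iff [simp]: "zrev z = [] \<longleftrightarrow> z = []"
  by (simp add: zrev_def)

lemma zigzag_zrev_append_self:
  assumes "zigzag L z"
  shows "zigzag L (zrev z @ z)" "zsrc L (zrev z @ z) = zsrc L z"
    "src L (fst (hd (zrev z @ z))) = zsrc L z"
proof -
  have "z \<noteq> []" using assms by (simp add: zigzag_def)
  then show "zigzag L (zrev z @ z)"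
    using zigzag_append[OF zigzag_zrev[OF assms] assms] by (simp add: zsrc_zrev)
  show "zsrc L (zrev z @ z) = zsrc L z"
    using \<open>z \<noteq> []\<close> by (simp add: zsrc_append)
  show "src L (fst (hd (zrev z @ z))) = zsrc L z"
    using \<open>z \<noteq> []\<close> by (simp add: hd_zrev zsrc_def)
qed

lemma D0_Int:
  assumes "LCSC L" "E \<in> D0 L v" "F \<in> D0 L v" "E \<inter> F \<noteq> {}"
  shows "E \<inter> F \<in> D0 L v"
proof -
  obtain z1 where z1: "E = Adom L z1" "zigzag L z1" "zsrc L z1 = v"
    using assms(2) by (auto simp: D0_def)
  obtain z2 where z2: "F = Adom L z2" "zigzag L z2" "zsrc L z2 = v"
    using assms(3) by (auto simp: D0_def)
  let ?w = "(zrev z2 @ z2) @ (zrev z1 @ z1)"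
  note w1 = zigzag_zrev_append_self[OF z1(2)] and w2 = zigzag_zrev_append_self[OF z2(2)]
  have "zigzag L ?w"
    using zigzag_append[OF w2(1) w1(1)] w1(3) w2(2) z1(3) z2(3) by simp
  moreover have w: "zsrc L ?w = v"
    using w1(2) z1(2,3) zsrc_append[of "zrev z1 @ z1" L "zrev z2 @ z2"] by (simp add: zigzag_def)
  moreover have "Adom L ?w = E \<inter> F"
  proof -
    have "\<forall>p\<in>set z1. cospan L p" "\<forall>p\<in>set z2. cospan L p"
      using z1(2) z2(2) by (simp_all add: zigzag_iff_successively)
    then have "zmap L ?w x \<noteq> None \<longleftrightarrow> zmap L z1 x \<noteq> None \<and> zmap L z2 x \<noteq> None" for x
      using zmap_append[of L "zrev z2 @ z2" "zrev z1 @ z1" x] zmap_zrev_append[OF assms(1)]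
      by (simp del: append_assoc)
    then show ?thesis using z1(1,3) z2(1,3) w by (auto simp: Adom_def)
  qed
  ultimately show ?thesis using assms(4) unfolding D0_def by blast
qed

section \<open>Filters in \<open>D0_v\<close>\<close>

lemma D0_subset_vL: "E \<in> D0 L v \<Longrightarrow> E \<subseteq> vL L v"
  by (auto simp: D0_def Adom_def)

lemma D0_nonempty: "E \<in> D0 L v \<Longrightarrow> E \<noteq> {}"
  by (auto simp: D0_def)

lemma D0_filter_subset: "D0_filter L v C \<Longrightarrow> C \<subseteq> D0 L v"
  and D0_filter_nonempty: "D0_filter L v C \<Longrightarrow> C \<noteq> {}"
  and D0_filter_Int: "D0_filter L v C \<Longrightarrow> E \<in> C \<Longrightarrow> F \<in> C \<Longrightarrow> E \<inter> F \<in> C"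
  and D0_filter_mono: "D0_filter L v C \<Longrightarrow> E \<in> C \<Longrightarrow> F \<in> D0 L v \<Longrightarrow> E \<subseteq> F \<Longrightarrow> F \<in> C"
  by (simp_all add: D0_filter_def)

lemma Lstar_subset_D0: "C \<in> Lstar L v \<Longrightarrow> C \<subseteq> D0 L v"
  by (simp add: Lstar_def D0_filter_def)

lemma D0_filter_finite_Int:
  assumes "D0_filter L v M" "E \<in> M" "finite I" "\<And>i. i \<in> I \<Longrightarrow> e i \<in> M"
  shows "E \<inter> (\<Inter>i\<in>I. e i) \<in> M"
  using assms(3,4)
proof (induction I rule: finite_induct)
  case (insert i I)
  then have "(E \<inter> (\<Inter>i\<in>I. e i)) \<inter> e i \<in> M"
    using D0_filter_Int[OF assms(1)] by simp
  then show ?case by (simp add: Int_ac)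
qed (simp add: assms(2))

lemma D0_filter_upward_closure:
  assumes "LCSC L" "B \<subseteq> D0 L v" "B \<noteq> {}" "\<And>a b. a \<in> B \<Longrightarrow> b \<in> B \<Longrightarrow> \<exists>c\<in>B. c \<subseteq> a \<inter> b"
  shows "D0_filter L v {H \<in> D0 L v. \<exists>b\<in>B. b \<subseteq> H}" (is "D0_filter L v ?C")
  unfolding D0_filter_def
proof (intro conjI ballI impI)
  show "?C \<noteq> {}" using assms(2,3) by blast
  show "?C \<subseteq> D0 L v" by blast
next
  fix H1 H2 assume "H1 \<in> ?C" "H2 \<in> ?C"
  then obtain b1 b2 where H: "H1 \<in> D0 L v" "H2 \<in> D0 L v"
    and b: "b1 \<in> B" "b2 \<in> B" "b1 \<subseteq> H1" "b2 \<subseteq> H2"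
    by auto
  obtain c where c: "c \<in> B" "c \<subseteq> b1 \<inter> b2"
    using assms(4)[OF b(1,2)] by auto
  have "c \<noteq> {}" using c(1) assms(2) D0_nonempty[of c] by auto
  moreover have cH: "c \<subseteq> H1 \<inter> H2" using b(3,4) c(2) by auto
  ultimately have "H1 \<inter> H2 \<noteq> {}" by auto
  then have "H1 \<inter> H2 \<in> D0 L v" by (rule D0_Int[OF assms(1) H])
  with c(1) cH show "H1 \<inter> H2 \<in> ?C" by blast
next
  fix H1 H2 assume "H1 \<in> ?C" "H2 \<in> D0 L v" "H1 \<subseteq> H2"
  then show "H2 \<in> ?C" by auto
qed

definition max_D0_filter :: "'a cat \<Rightarrow> 'a \<Rightarrow> 'a set set \<Rightarrow> bool" where
  "max_D0_filter L v M \<longleftrightarrow> D0_filter L v M \<and> (\<forall>M'. D0_filter L v M' \<and> M \<subseteq> M' \<longrightarrow> M' = M)"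

lemma D0_filter_Union_chain:
  assumes "\<K> \<noteq> {}" "\<And>K. K \<in> \<K> \<Longrightarrow> D0_filter L v K" "\<And>K K'. K \<in> \<K> \<Longrightarrow> K' \<in> \<K> \<Longrightarrow> K \<subseteq> K' \<or> K' \<subseteq> K"
  shows "D0_filter L v (\<Union>\<K>)"
  unfolding D0_filter_def
proof (intro conjI ballI impI)
  obtain K where "K \<in> \<K>" using assms(1) by blast
  then show "\<Union>\<K> \<noteq> {}" using D0_filter_nonempty[OF assms(2)] by blast
  show "\<Union>\<K> \<subseteq> D0 L v" using D0_filter_subset[OF assms(2)] by blast
next
  fix E F assume "E \<in> \<Union>\<K>" "F \<in> \<Union>\<K>"
  then obtain K where "K \<in> \<K>" "E \<in> K" "F \<in> K" using assms(3) by blast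
  then show "E \<inter> F \<in> \<Union>\<K>" using D0_filter_Int[OF assms(2)] by blast
next
  fix E F assume "E \<in> \<Union>\<K>" "F \<in> D0 L v" "E \<subseteq> F"
  then show "F \<in> \<Union>\<K>" using D0_filter_mono[OF assms(2)] by blast
qed

lemma ex_max_D0_filter:
  assumes "D0_filter L v C"
  obtains M where "max_D0_filter L v M" "C \<subseteq> M"
proof -
  let ?A = "{M. D0_filter L v M \<and> C \<subseteq> M}"
  have "\<exists>M\<in>?A. \<forall>M'\<in>?A. M \<subseteq> M' \<longrightarrow> M' = M"
  proof (rule subset_Zorn_nonempty)
    show "?A \<noteq> {}" using assms by blast
  next
    fix \<K> assume "\<K> \<noteq> {}" "subset.chain ?A \<K>"
    then show "\<Union>\<K> \<in> ?A"
      using D0_filter_Union_chain[of \<K> L v] unfolding subset.chain_def by blast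
  qed
  then show thesis
    using that unfolding max_D0_filter_def by (metis (mono_tags, lifting) mem_Collect_eq order_trans)
qed

lemma max_D0_filter_disjoint:
  assumes "LCSC L" "max_D0_filter L v M" "F \<in> D0 L v" "F \<notin> M"
  shows "\<exists>E\<in>M. E \<inter> F = {}"
proof (rule ccontr)
  assume meets: "\<not> (\<exists>E\<in>M. E \<inter> F = {})"
  have M: "D0_filter L v M" using assms(2) by (simp add: max_D0_filter_def)
  let ?B = "{E \<inter> F | E. E \<in> M}"
  have "D0_filter L v {H \<in> D0 L v. \<exists>b\<in>?B. b \<subseteq> H}"
  proof (rule D0_filter_upward_closure[OF assms(1)])
    show "?B \<subseteq> D0 L v"
      using meets D0_filter_subset[OF M] D0_Int[OF assms(1) _ assms(3)] by blast
    show "?B \<noteq> {}"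
      using D0_filter_nonempty[OF M] by blast
    show "\<exists>c\<in>?B. c \<subseteq> a \<inter> b" if ab: "a \<in> ?B" "b \<in> ?B" for a b
    proof -
      obtain E1 E2 where E: "E1 \<in> M" "E2 \<in> M" and "a = E1 \<inter> F" "b = E2 \<inter> F"
        using ab by auto
      then have "a \<inter> b = (E1 \<inter> E2) \<inter> F" by auto
      moreover have "(E1 \<inter> E2) \<inter> F \<in> ?B" using D0_filter_Int[OF M E] by auto
      ultimately show ?thesis by auto
    qed
  qed
  moreover have "M \<subseteq> {H \<in> D0 L v. \<exists>b\<in>?B. b \<subseteq> H}"
    using D0_filter_subset[OF M] by blast
  moreover have "F \<in> {H \<in> D0 L v. \<exists>b\<in>?B. b \<subseteq> H}"
    using D0_filter_nonempty[OF M] assms(3) by blast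
  ultimately show False
    using assms(2,4) unfolding max_D0_filter_def by blast
qed

lemma max_D0_filter_avoids:
  assumes "LCSC L" "max_D0_filter L v M" "E \<in> M" "finite \<F>" "\<F> \<subseteq> D0 L v" "\<F> \<inter> M = {}"
  shows "\<exists>G\<in>M. G \<subseteq> E - \<Union>\<F>"
proof -
  have M: "D0_filter L v M" using assms(2) by (simp add: max_D0_filter_def)
  have "\<forall>F\<in>\<F>. \<exists>E'. E' \<in> M \<and> E' \<inter> F = {}"
    using max_D0_filter_disjoint[OF assms(1,2)] assms(5,6) by blast
  from bchoice[OF this] obtain e where e: "\<forall>F\<in>\<F>. e F \<in> M \<and> e F \<inter> F = {}"
    by blast
  have "E \<inter> (\<Inter>F\<in>\<F>. e F) \<in> M"
    using D0_filter_finite_Int[OF M assms(3,4)] e by simp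
  moreover have "E \<inter> (\<Inter>F\<in>\<F>. e F) \<subseteq> E - \<Union>\<F>"
  proof
    fix x assume x: "x \<in> E \<inter> (\<Inter>F\<in>\<F>. e F)"
    have "x \<notin> F" if "F \<in> \<F>" for F
      using x that e by blast
    with x show "x \<in> E - \<Union>\<F>" by blast
  qed
  ultimately show ?thesis by blast
qed

lemma max_D0_filter_Lstar:
  assumes "LCSC L" "max_D0_filter L v M"
  shows "M \<in> Lstar L v"
proof -
  have M: "D0_filter L v M" using assms(2) by (simp add: max_D0_filter_def)
  have "\<not> covers \<F> M" if \<F>: "finite \<F>" "\<F> \<subseteq> D0 L v" "\<F> \<inter> M = {}" for \<F>
  proof
    assume "covers \<F> M"
    then obtain E where E: "E \<in> M" "E \<subseteq> \<Union>\<F>" by (auto simp: covers_def)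
    obtain G where G: "G \<in> M" "G \<subseteq> E - \<Union>\<F>"
      using max_D0_filter_avoids[OF assms E(1) \<F>] by blast
    have "G \<noteq> {}" using D0_filter_subset[OF M] G(1) by (auto dest: D0_nonempty)
    with E(2) G(2) show False by blast
  qed
  with M show ?thesis by (simp add: Lstar_def)
qed

lemma Lstarstar_iff_max_D0_filter:
  assumes "LCSC L"
  shows "C \<in> Lstarstar L v \<longleftrightarrow> max_D0_filter L v C"
proof
  assume C: "C \<in> Lstarstar L v"
  then have "D0_filter L v C" by (simp add: Lstarstar_def Lstar_def)
  then obtain M where M: "max_D0_filter L v M" "C \<subseteq> M" by (rule ex_max_D0_filter)
  with C max_D0_filter_Lstar[OF assms M(1)] have "M = C" by (simp add: Lstarstar_def)
  with M show "max_D0_filter L v C" by simp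
next
  assume C: "max_D0_filter L v C"
  have "C' = C" if "C' \<in> Lstar L v" "C \<subseteq> C'" for C'
    using C that by (simp add: max_D0_filter_def Lstar_def)
  with max_D0_filter_Lstar[OF assms C] show "C \<in> Lstarstar L v"
    by (simp add: Lstarstar_def)
qed

lemma D0_in_Lstarstar:
  assumes "LCSC L" "G \<in> D0 L v"
  obtains C where "C \<in> Lstarstar L v" "G \<in> C"
proof -
  have "D0_filter L v {H \<in> D0 L v. \<exists>b\<in>{G}. b \<subseteq> H}"
    using assms by (intro D0_filter_upward_closure) auto
  then obtain M where M: "max_D0_filter L v M" "{H \<in> D0 L v. \<exists>b\<in>{G}. b \<subseteq> H} \<subseteq> M"
    by (rule ex_max_D0_filter)
  have "G \<in> M" using M(2) assms(2) by blast
  with M(1) show thesis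
    using that Lstarstar_iff_max_D0_filter[OF assms(1)] by blast
qed

section \<open>The ultrafilter \<open>U_C\<close>\<close>

lemma ring_of_sets_Aring: "ring_of_sets (vL L v) (Aring L v)"
  unfolding Aring_def by (rule ring_of_sets_Inter_rings) (auto dest: D0_subset_vL)

lemma D0_subset_Aring: "D0 L v \<subseteq> Aring L v"
  unfolding Aring_def by (rule Inter_greatest) simp

lemma Aring_minimal:
  assumes "ring_of_sets (vL L v) M" "D0 L v \<subseteq> M"
  shows "Aring L v \<subseteq> M"
  unfolding Aring_def by (rule Inter_lower) (simp add: assms)

lemma Aring_Int:
  assumes "A \<in> Aring L v" "B \<in> Aring L v"
  shows "A \<inter> B \<in> Aring L v"
proof -
  interpret ring_of_sets "vL L v" "Aring L v" by (rule ring_of_sets_Aring)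
  show ?thesis using assms by (rule Int)
qed

lemma Lstar_not_covers_iff:
  assumes "C \<in> Lstar L v" "finite \<F>" "\<F> \<subseteq> D0 L v"
  shows "\<not> covers \<F> C \<longleftrightarrow> \<F> \<inter> C = {}"
  using assms unfolding Lstar_def covers_def by blast

definition UC_generators :: "'a cat \<Rightarrow> 'a \<Rightarrow> 'a set set \<Rightarrow> 'a set set" where
  "UC_generators L v C = {E - \<Union>\<F> | E \<F>. E \<in> C \<and> finite \<F> \<and> \<F> \<subseteq> D0 L v \<and> \<not> covers \<F> C}"

lemma UC_generatorsI:
  "E \<in> C \<Longrightarrow> finite \<F> \<Longrightarrow> \<F> \<subseteq> D0 L v \<Longrightarrow> \<not> covers \<F> C \<Longrightarrow> E - \<Union>\<F> \<in> UC_generators L v C"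
  unfolding UC_generators_def by blast

lemma UC_generatorsE:
  assumes "N \<in> UC_generators L v C"
  obtains E \<F> where "N = E - \<Union>\<F>" "E \<in> C" "finite \<F>" "\<F> \<subseteq> D0 L v" "\<not> covers \<F> C"
  using assms unfolding UC_generators_def by blast

lemma UC_generators_subset_Aring:
  assumes "C \<subseteq> D0 L v"
  shows "UC_generators L v C \<subseteq> Aring L v"
proof
  interpret ring_of_sets "vL L v" "Aring L v" by (rule ring_of_sets_Aring)
  fix N assume "N \<in> UC_generators L v C"
  then obtain E \<F> where N: "N = E - \<Union>\<F>" "E \<in> C" "finite \<F>" "\<F> \<subseteq> D0 L v"
    by (rule UC_generatorsE)
  have "E \<in> Aring L v" using N(2) assms D0_subset_Aring[of L v] by blast
  moreover have "\<Union>\<F> \<in> Aring L v" using N(3,4) D0_subset_Aring[of L v] by (intro finite_Union) auto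
  ultimately show "N \<in> Aring L v" unfolding N(1) by (rule Diff)
qed

lemma empty_notin_UC_generators: "{} \<notin> UC_generators L v C"
proof
  assume "{} \<in> UC_generators L v C"
  then obtain E \<F> where "{} = E - \<Union>\<F>" "E \<in> C" "\<not> covers \<F> C"
    by (rule UC_generatorsE)
  then show False unfolding covers_def by blast
qed

lemma UC_generators_Int:
  assumes "C \<in> Lstar L v" "N1 \<in> UC_generators L v C" "N2 \<in> UC_generators L v C"
  shows "N1 \<inter> N2 \<in> UC_generators L v C"
proof -
  obtain E1 \<F>1 where 1: "N1 = E1 - \<Union>\<F>1" "E1 \<in> C" "finite \<F>1" "\<F>1 \<subseteq> D0 L v" "\<not> covers \<F>1 C"
    using assms(2) by (rule UC_generatorsE)
  obtain E2 \<F>2 where 2: "N2 = E2 - \<Union>\<F>2" "E2 \<in> C" "finite \<F>2" "\<F>2 \<subseteq> D0 L v" "\<not> covers \<F>2 C"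
    using assms(3) by (rule UC_generatorsE)
  have "D0_filter L v C" using assms(1) by (simp add: Lstar_def)
  then have "E1 \<inter> E2 \<in> C" using 1(2) 2(2) by (rule D0_filter_Int)
  moreover have "finite (\<F>1 \<union> \<F>2)" "\<F>1 \<union> \<F>2 \<subseteq> D0 L v" using 1(3,4) 2(3,4) by auto
  moreover from this have "\<not> covers (\<F>1 \<union> \<F>2) C"
    using Lstar_not_covers_iff[OF assms(1)] 1(3-5) 2(3-5) by (simp add: Int_Un_distrib2)
  ultimately have "(E1 \<inter> E2) - \<Union>(\<F>1 \<union> \<F>2) \<in> UC_generators L v C"
    by (rule UC_generatorsI)
  moreover have "N1 \<inter> N2 = (E1 \<inter> E2) - \<Union>(\<F>1 \<union> \<F>2)" using 1(1) 2(1) by blast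
  ultimately show ?thesis by simp
qed

lemma Diff_in_UC_generators:
  assumes "C \<in> Lstar L v" "E \<in> C" "F \<in> D0 L v" "F \<notin> C"
  shows "E - F \<in> UC_generators L v C"
proof -
  have "\<not> covers {F} C" using Lstar_not_covers_iff[OF assms(1)] assms(3,4) by simp
  then have "E - \<Union>{F} \<in> UC_generators L v C"
    using assms(2,3) by (intro UC_generatorsI) auto
  then show ?thesis by simp
qed

lemma Lstar_subset_UC_generators:
  assumes "C \<in> Lstar L v"
  shows "C \<subseteq> UC_generators L v C"
proof
  fix E assume "E \<in> C"
  moreover have "\<not> covers {} C" using Lstar_not_covers_iff[OF assms] by simp
  ultimately have "E - \<Union>{} \<in> UC_generators L v C"
    by (intro UC_generatorsI) auto
  then show "E \<in> UC_generators L v C" by simp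
qed

lemma decides_UC_generators:
  assumes "C \<in> Lstar L v" "A \<in> Aring L v"
  shows "decides (UC_generators L v C) A"
proof -
  have C: "D0_filter L v C" using assms(1) by (simp add: Lstar_def)
  obtain E0 where E0: "E0 \<in> C" using D0_filter_nonempty[OF C] by blast
  have "UC_generators L v C \<noteq> {}" using E0 Lstar_subset_UC_generators[OF assms(1)] by blast
  then have "ring_of_sets (vL L v) {A \<in> Pow (vL L v). decides (UC_generators L v C) A}"
    using UC_generators_Int[OF assms(1)] by (intro ring_of_sets_decided)
  moreover have "decides (UC_generators L v C) F" if "F \<in> D0 L v" for F
  proof (cases "F \<in> C")
    case True
    then show ?thesis
      using Lstar_subset_UC_generators[OF assms(1)] unfolding decides_def by blast
  next
    case False
    then have "E0 - F \<in> UC_generators L v C"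
      using Diff_in_UC_generators[OF assms(1) E0 that] by blast
    moreover have "(E0 - F) \<inter> F = {}" by blast
    ultimately show ?thesis unfolding decides_def by (intro disjI2 bexI)
  qed
  then have "D0 L v \<subseteq> {A \<in> Pow (vL L v). decides (UC_generators L v C) A}"
    using D0_subset_vL[of _ L v] by auto
  ultimately have "Aring L v \<subseteq> {A \<in> Pow (vL L v). decides (UC_generators L v C) A}"
    by (rule Aring_minimal)
  with assms(2) show ?thesis by blast
qed

lemma ring_ultrafilter_UC_generators:
  assumes "C \<in> Lstar L v"
  shows "ring_ultrafilter (Aring L v) (upward_closure (Aring L v) (UC_generators L v C))"
proof (rule ring_ultrafilter_upward_closure[OF ring_of_sets_Aring])
  have C: "D0_filter L v C" using assms(1) by (simp add: Lstar_def)
  show "UC_generators L v C \<subseteq> Aring L v"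
    by (rule UC_generators_subset_Aring[OF D0_filter_subset[OF C]])
  show "UC_generators L v C \<noteq> {}"
    using D0_filter_nonempty[OF C] Lstar_subset_UC_generators[OF assms] by blast
  show "{} \<notin> UC_generators L v C" by (rule empty_notin_UC_generators)
  show "a \<inter> b \<in> UC_generators L v C"
    if "a \<in> UC_generators L v C" "b \<in> UC_generators L v C" for a b
    using UC_generators_Int[OF assms that] .
  show "decides (UC_generators L v C) A" if "A \<in> Aring L v" for A
    using decides_UC_generators[OF assms that] .
qed

lemma upward_closure_UC_generators_trace:
  assumes "C \<in> Lstar L v"
  shows "upward_closure (Aring L v) (UC_generators L v C) \<inter> D0 L v = C"
proof (intro equalityI subsetI)
  have C: "D0_filter L v C" using assms(1) by (simp add: Lstar_def)
  fix A assume "A \<in> upward_closure (Aring L v) (UC_generators L v C) \<inter> D0 L v"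
  then obtain N where A: "A \<in> D0 L v" and N: "N \<in> UC_generators L v C" "N \<subseteq> A"
    unfolding upward_closure_def by blast
  show "A \<in> C"
  proof (rule ccontr)
    assume "A \<notin> C"
    obtain E0 where "E0 \<in> C" using D0_filter_nonempty[OF C] by blast
    then have "E0 - A \<in> UC_generators L v C"
      using Diff_in_UC_generators[OF assms _ A \<open>A \<notin> C\<close>] by blast
    then have "N \<inter> (E0 - A) \<in> UC_generators L v C"
      using UC_generators_Int[OF assms N(1)] by blast
    moreover have "N \<inter> (E0 - A) = {}" using N(2) by blast
    ultimately show False using empty_notin_UC_generators by metis
  qed
next
  have C: "D0_filter L v C" using assms(1) by (simp add: Lstar_def)
  fix A assume "A \<in> C"
  then show "A \<in> upward_closure (Aring L v) (UC_generators L v C) \<inter> D0 L v"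
    using Lstar_subset_UC_generators[OF assms] D0_filter_subset[OF C] D0_subset_Aring[of L v]
    unfolding upward_closure_def by auto
qed

lemma Xv_trace_unique:
  assumes "C \<in> Lstar L v" "U \<in> Xv L v" "U \<inter> D0 L v = C"
  shows "U = upward_closure (Aring L v) (UC_generators L v C)"
proof -
  have U: "ring_ultrafilter (Aring L v) U" using assms(2) by (simp add: Xv_def)
  then have filter: "ring_filter (Aring L v) U" by (simp add: ring_ultrafilter_def)
  have "UC_generators L v C \<subseteq> U"
  proof
    fix N assume "N \<in> UC_generators L v C"
    then obtain E \<F> where N: "N = E - \<Union>\<F>" "E \<in> C" "finite \<F>" "\<F> \<subseteq> D0 L v" "\<not> covers \<F> C"
      by (rule UC_generatorsE)
    have "E \<in> U" using N(2) assms(3) by blast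
    moreover have "\<F> \<subseteq> Aring L v" using N(4) D0_subset_Aring[of L v] by blast
    moreover have "\<F> \<inter> U = {}" using N(4,5) assms(3) unfolding covers_def by blast
    ultimately show "N \<in> U"
      unfolding N(1) by (rule ring_ultrafilter_Diff_Union[OF ring_of_sets_Aring U _ N(3)])
  qed
  then have "upward_closure (Aring L v) (UC_generators L v C) \<subseteq> U"
    using ring_filter_mono[OF filter] unfolding upward_closure_def by blast
  then show ?thesis
    using ring_ultrafilter_UC_generators[OF assms(1)] filter unfolding ring_ultrafilter_def by blast
qed

lemma UC_eq_upward_closure:
  assumes "C \<in> Lstar L v"
  shows "UC L v C = upward_closure (Aring L v) (UC_generators L v C)"
  unfolding UC_def
proof (rule the_equality)
  show "upward_closure (Aring L v) (UC_generators L v C) \<in> Xv L v \<and>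
    upward_closure (Aring L v) (UC_generators L v C) \<inter> D0 L v = C"
    using ring_ultrafilter_UC_generators[OF assms] upward_closure_UC_generators_trace[OF assms]
    by (simp add: Xv_def)
qed (use Xv_trace_unique[OF assms] in blast)

lemma UC_in_Xv: "C \<in> Lstar L v \<Longrightarrow> UC L v C \<in> Xv L v"
  by (simp add: Xv_def UC_eq_upward_closure ring_ultrafilter_UC_generators)

lemma UC_mem_iff:
  assumes "C \<in> Lstar L v"
  shows "A \<in> UC L v C \<longleftrightarrow> A \<in> Aring L v \<and> (\<exists>N\<in>UC_generators L v C. N \<subseteq> A)"
  unfolding UC_eq_upward_closure[OF assms] upward_closure_def by (rule mem_Collect_eq)

lemma Lstarstar_UC_mem_iff:
  assumes "LCSC L" "C \<in> Lstarstar L v"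
  shows "A \<in> UC L v C \<longleftrightarrow> A \<in> Aring L v \<and> (\<exists>G\<in>C. G \<subseteq> A)"
proof -
  have C: "C \<in> Lstar L v" using assms(2) by (simp add: Lstarstar_def)
  have maxC: "max_D0_filter L v C" using assms by (simp add: Lstarstar_iff_max_D0_filter)
  have "(\<exists>N\<in>UC_generators L v C. N \<subseteq> A) \<longleftrightarrow> (\<exists>G\<in>C. G \<subseteq> A)"
  proof
    assume "\<exists>N\<in>UC_generators L v C. N \<subseteq> A"
    then obtain N where "N \<in> UC_generators L v C" "N \<subseteq> A" by blast
    then obtain E \<F> where N: "N = E - \<Union>\<F>" "E \<in> C" "finite \<F>" "\<F> \<subseteq> D0 L v" "\<not> covers \<F> C"
      by (elim UC_generatorsE)
    then have "\<F> \<inter> C = {}" unfolding covers_def by blast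
    then obtain G where "G \<in> C" "G \<subseteq> E - \<Union>\<F>"
      using max_D0_filter_avoids[OF assms(1) maxC N(2-4)] by blast
    moreover have "E - \<Union>\<F> \<subseteq> A" using \<open>N \<subseteq> A\<close> unfolding N(1) .
    ultimately show "\<exists>G\<in>C. G \<subseteq> A" by (meson order_trans)
  next
    assume "\<exists>G\<in>C. G \<subseteq> A"
    with Lstar_subset_UC_generators[OF C] show "\<exists>N\<in>UC_generators L v C. N \<subseteq> A" by blast
  qed
  with UC_mem_iff[OF C] show ?thesis by simp
qed

section \<open>The boundary\<close>

definition basic_open :: "'a cat \<Rightarrow> 'a \<Rightarrow> 'a set \<Rightarrow> 'a set set set" where
  "basic_open L v A = {U \<in> Xv L v. A \<in> U}"

lemma Xtop_eq: "Xtop L v = topology_generated_by (basic_open L v ` Aring L v)"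
  by (simp add: Xtop_def basic_open_def Setcompr_eq_image)

lemma basic_open_Int:
  assumes "A \<in> Aring L v" "B \<in> Aring L v"
  shows "basic_open L v A \<inter> basic_open L v B = basic_open L v (A \<inter> B)"
proof -
  have "A \<inter> B \<in> U \<longleftrightarrow> A \<in> U \<and> B \<in> U" if "U \<in> Xv L v" for U
  proof -
    have U: "ring_filter (Aring L v) U" using that by (simp add: Xv_def ring_ultrafilter_def)
    show ?thesis
      using ring_filter_Int[OF U] ring_filter_mono[OF U _ assms(1)] ring_filter_mono[OF U _ assms(2)]
      by blast
  qed
  then show ?thesis by (auto simp: basic_open_def)
qed

lemma basic_open_image_Int_closed:
  assumes "a \<in> basic_open L v ` Aring L v" "b \<in> basic_open L v ` Aring L v"
  shows "a \<inter> b \<in> basic_open L v ` Aring L v"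
proof -
  from assms obtain A1 A2 where A: "A1 \<in> Aring L v" "A2 \<in> Aring L v"
    and ab: "a = basic_open L v A1" "b = basic_open L v A2"
    by blast
  have "basic_open L v (A1 \<inter> A2) \<in> basic_open L v ` Aring L v" using Aring_Int[OF A] by (rule imageI)
  then show ?thesis unfolding ab basic_open_Int[OF A] .
qed

lemma UC_Lstarstar_meets_basic_open_iff:
  "UC L v ` Lstarstar L v \<inter> basic_open L v A \<noteq> {} \<longleftrightarrow> (\<exists>C\<in>Lstarstar L v. A \<in> UC L v C)"
proof
  assume "UC L v ` Lstarstar L v \<inter> basic_open L v A \<noteq> {}"
  then obtain C where "C \<in> Lstarstar L v" "UC L v C \<in> basic_open L v A" by blast
  then show "\<exists>C\<in>Lstarstar L v. A \<in> UC L v C" unfolding basic_open_def by blast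
next
  assume "\<exists>C\<in>Lstarstar L v. A \<in> UC L v C"
  then obtain C where C: "C \<in> Lstarstar L v" "A \<in> UC L v C" by blast
  then have "C \<in> Lstar L v" by (simp add: Lstarstar_def)
  then have "UC L v C \<in> Xv L v" by (rule UC_in_Xv)
  with C have "UC L v C \<in> UC L v ` Lstarstar L v \<inter> basic_open L v A"
    unfolding basic_open_def by blast
  then show "UC L v ` Lstarstar L v \<inter> basic_open L v A \<noteq> {}" by blast
qed

lemma boundary_iff:
  assumes "U \<in> Xv L v"
  shows "U \<in> boundary L v \<longleftrightarrow> (\<forall>A\<in>Aring L v. A \<in> U \<longrightarrow> (\<exists>C\<in>Lstarstar L v. A \<in> UC L v C))"
proof -
  let ?B = "basic_open L v ` Aring L v"
  have mem: "U \<in> basic_open L v A \<longleftrightarrow> A \<in> U" for A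
    using assms by (simp add: basic_open_def)
  have U: "ring_filter (Aring L v) U" using assms by (simp add: Xv_def ring_ultrafilter_def)
  obtain A0 where "A0 \<in> U" using ring_filter_nonempty[OF U] by blast
  then have "U \<in> \<Union>?B"
    using ring_filter_subset[OF U] mem[of A0] by blast
  have "U \<in> boundary L v \<longleftrightarrow> U \<in> topology_generated_by ?B closure_of (UC L v ` Lstarstar L v)"
    by (simp add: boundary_def Xtop_eq)
  also have "\<dots> \<longleftrightarrow> U \<in> \<Union>?B \<and> (\<forall>b\<in>?B. U \<in> b \<longrightarrow> UC L v ` Lstarstar L v \<inter> b \<noteq> {})"
    by (rule in_closure_of_Int_closed_basis) (rule basic_open_image_Int_closed)
  also have "\<dots> \<longleftrightarrow> (\<forall>A\<in>Aring L v. A \<in> U \<longrightarrow> UC L v ` Lstarstar L v \<inter> basic_open L v A \<noteq> {})"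
    using \<open>U \<in> \<Union>?B\<close> by (simp add: mem)
  finally show ?thesis by (simp only: UC_Lstarstar_meets_basic_open_iff)
qed

theorem mainTheorem12:
  fixes L :: "'a cat" and v :: 'a and C :: "'a set set"
  assumes "LCSC L" and "v \<in> obj L" and "C \<in> Lstar L v"
  shows "UC L v C \<in> boundary L v \<longleftrightarrow>
    (\<forall>\<F>. finite \<F> \<and> \<F> \<subseteq> D0 L v \<and> \<not> covers \<F> C \<longrightarrow>
       (\<forall>E\<in>C. \<exists>G\<in>D0 L v. G \<subseteq> E - \<Union>\<F>))"
  unfolding boundary_iff[OF UC_in_Xv[OF assms(3)]]
proof (intro iffI allI impI ballI)
  fix \<F> E assume bd: "\<forall>A\<in>Aring L v. A \<in> UC L v C \<longrightarrow> (\<exists>C'\<in>Lstarstar L v. A \<in> UC L v C')"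
    and \<F>: "finite \<F> \<and> \<F> \<subseteq> D0 L v \<and> \<not> covers \<F> C" and E: "E \<in> C"
  have "C \<subseteq> D0 L v" by (rule Lstar_subset_D0[OF assms(3)])
  moreover have N: "E - \<Union>\<F> \<in> UC_generators L v C" using E \<F> by (intro UC_generatorsI) auto
  ultimately have "E - \<Union>\<F> \<in> Aring L v" by (rule subsetD[OF UC_generators_subset_Aring])
  moreover from this have "E - \<Union>\<F> \<in> UC L v C" using N UC_mem_iff[OF assms(3)] by blast
  ultimately obtain C' where C': "C' \<in> Lstarstar L v" "E - \<Union>\<F> \<in> UC L v C'" using bd by blast
  then obtain G where "G \<in> C'" "G \<subseteq> E - \<Union>\<F>" using Lstarstar_UC_mem_iff[OF assms(1)] by blast
  moreover have "C' \<subseteq> D0 L v" using C'(1) by (intro Lstar_subset_D0) (simp add: Lstarstar_def)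
  ultimately show "\<exists>G\<in>D0 L v. G \<subseteq> E - \<Union>\<F>" by blast
next
  fix A assume H: "\<forall>\<F>. finite \<F> \<and> \<F> \<subseteq> D0 L v \<and> \<not> covers \<F> C \<longrightarrow> (\<forall>E\<in>C. \<exists>G\<in>D0 L v. G \<subseteq> E - \<Union>\<F>)"
    and A: "A \<in> Aring L v" "A \<in> UC L v C"
  obtain N where "N \<in> UC_generators L v C" "N \<subseteq> A" using A(2) UC_mem_iff[OF assms(3)] by blast
  then obtain E \<F> where N: "E - \<Union>\<F> \<subseteq> A" "E \<in> C" "finite \<F>" "\<F> \<subseteq> D0 L v" "\<not> covers \<F> C"
    by (metis UC_generatorsE)
  then obtain G where "G \<in> D0 L v" "G \<subseteq> E - \<Union>\<F>" using H[rule_format, of \<F> E] by auto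
  with N(1) have "G \<in> D0 L v" "G \<subseteq> A" by auto
  moreover obtain C' where "C' \<in> Lstarstar L v" "G \<in> C'" using D0_in_Lstarstar[OF assms(1) \<open>G \<in> D0 L v\<close>] .
  ultimately show "\<exists>C'\<in>Lstarstar L v. A \<in> UC L v C'" using A(1) Lstarstar_UC_mem_iff[OF assms(1)] by blast
qed

end
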